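(* Let $y_0:A\to\Delta(B)$ satisfy $U^1(\mu_0,y_0)>U^1(\mu,y_0)$ for every $\mu\in\mathcal{M}\setminus\{\mu_0\}$ and $U^2(\mu_0,y_0)>v^2$; let $\bar y:A\to\Delta(B)$ satisfy $U^1(\mu_0,\bar y)\ge U^1(\mu,\bar y)$ for all $\mu\in\mathcal{M}$ and $U^2(\mu_0,\bar y)\ge v^2$; let $\varepsilon\in(0,1]$ and $y=\varepsilon y_0+(1-\varepsilon)\bar y$. Assume $\mathcal{M}$ has at least one extreme point different from $\mu_0$, and let $\mathcal{M}_e$ be the set of extreme points of $\mathcal{M}$, $c_1=\min_{\mu_e\in\mathcal{M}_e,\mu_e\neq\mu_0}\big(U^1(\mu_0,y_0)-U^1(\mu_e,y_0)\big)$ and $c_2=\max_{\mu_e\in\mathcal{M}_e,\mu_e\ne\mu_0}\|\mu_e-\mu_0\|_1$. Then for every $\mu\in\mathcal{M}$, $U^1(\mu_0,y)-U^1(\mu,y)\ge\frac{\varepsilon c_1}{c_2}\|\mu-\mu_0\|_1$.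
   Context: $S$ is finite, $A=S$, $B$ finite, $u=(u^1,u^2):S\times B\to\mathbb{R}^2$ extended linearly to mixed actions. $m\in\Delta(S)$ has full support. $\mathcal{M}\subset\Delta(S\times A)$ is the (polytope) set of distributions on $S\times A$ both of whose marginals equal $m$; $\mu_0(s,s)=m(s)$, $\mu_0(s,a)=0$ for $s\ne a$. For $\mu\in\mathcal{M}$ and $y:A\to\Delta(B)$, $U(\mu,y)=\sum_{s,a}\mu(s,a)u(s,y(\cdot\mid a))$; $v^2=\max_{b\in B}\sum_s m(s)u^2(s,b)$. *)

theory Defs
  imports "HOL-Analysis.Analysis"
begin

definition is_distr :: "('b::finite \<Rightarrow> real) \<Rightarrow> bool" where
  "is_distr p \<longleftrightarrow> (\<forall>b. 0 \<le> p b) \<and> (\<Sum>b\<in>UNIV. p b) = 1"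

definition is_strategy :: "('s::finite \<Rightarrow> 'b::finite \<Rightarrow> real) \<Rightarrow> bool" where
  "is_strategy y \<longleftrightarrow> (\<forall>a. is_distr (y a))"

text \<open>Distributions on S x A (A = S) as vectors in R^(S x A) with both marginals equal to m.\<close>
definition Mset :: "('s::finite \<Rightarrow> real) \<Rightarrow> (real ^ ('s \<times> 's)) set" where
  "Mset m = {\<mu>. (\<forall>x. 0 \<le> \<mu> $ x) \<and> (\<Sum>x\<in>UNIV. \<mu> $ x) = 1
              \<and> (\<forall>s. (\<Sum>a\<in>UNIV. \<mu> $ (s, a)) = m s)
              \<and> (\<forall>a. (\<Sum>s\<in>UNIV. \<mu> $ (s, a)) = m a)}"

definition mu0 :: "('s::finite \<Rightarrow> real) \<Rightarrow> real ^ ('s \<times> 's)" where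
  "mu0 m = (\<chi> x. if fst x = snd x then m (fst x) else 0)"

definition uext :: "('s \<Rightarrow> 'b::finite \<Rightarrow> real) \<Rightarrow> 's \<Rightarrow> ('b \<Rightarrow> real) \<Rightarrow> real" where
  "uext u s q = (\<Sum>b\<in>UNIV. q b * u s b)"

definition Upay :: "('s::finite \<Rightarrow> 'b::finite \<Rightarrow> real) \<Rightarrow> real ^ ('s \<times> 's)
                     \<Rightarrow> ('s \<Rightarrow> 'b \<Rightarrow> real) \<Rightarrow> real" where
  "Upay u \<mu> y = (\<Sum>x\<in>UNIV. \<mu> $ x * uext u (fst x) (y (snd x)))"

definition v2 :: "('s::finite \<Rightarrow> 'b::finite \<Rightarrow> real) \<Rightarrow> ('s \<Rightarrow> real) \<Rightarrow> real" where
  "v2 u2 m = Max (range (\<lambda>b. \<Sum>s\<in>UNIV. m s * u2 s b))"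

definition l1dist :: "real ^ 'n::finite \<Rightarrow> real ^ 'n \<Rightarrow> real" where
  "l1dist \<mu> \<nu> = (\<Sum>x\<in>UNIV. \<bar>\<mu> $ x - \<nu> $ x\<bar>)"

end

theory Submission
  imports Defs
begin

text \<open>
  The set \<open>\<M>\<close> of couplings of \<open>m\<close> with itself is a polytope, so by Krein--Milman it is the
  convex hull of its finitely many extreme points. The payoff gap
  \<open>\<mu> \<mapsto> U\<^sup>1(\<mu>\<^sub>0,y\<^sub>0) - U\<^sup>1(\<mu>,y\<^sub>0)\<close> is affine and \<open>\<mu> \<mapsto> (c\<^sub>1/c\<^sub>2) \<parallel>\<mu> - \<mu>\<^sub>0\<parallel>\<^sub>1\<close> is convex, so the set where the
  latter is below the former is convex; it contains every extreme point by the choice of \<open>c\<^sub>1\<close>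
  and \<open>c\<^sub>2\<close>, hence all of \<open>\<M>\<close>. Finally \<open>U\<close> is linear in the strategy and \<open>\<mu>\<^sub>0\<close> is a best
  response to \<open>ybar\<close>, so mixing in \<open>ybar\<close> scales the bound by \<open>\<epsilon>\<close> and adds a nonnegative term.
\<close>

lemma convex_le_concave_from_extreme_points:
  fixes K :: "'a::euclidean_space set" and f g :: "'a \<Rightarrow> real"
  assumes "compact K" "convex_on K f" "concave_on K g"
    and extreme: "\<And>x. x extreme_point_of K \<Longrightarrow> f x \<le> g x"
    and "x \<in> K"
  shows "f x \<le> g x"
proof -
  have "convex K"
    using assms(2) convex_on_imp_convex by blast
  have "convex {x \<in> K. f x \<le> g x}"
    unfolding convex_def
  proof (intro ballI allI impI)
    fix x y and u v :: real
    assume x: "x \<in> {x \<in> K. f x \<le> g x}" and y: "y \<in> {x \<in> K. f x \<le> g x}"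
      and uv: "0 \<le> u" "0 \<le> v" "u + v = 1"
    have "f (u *\<^sub>R x + v *\<^sub>R y) \<le> u * f x + v * f y"
      using assms(2) x y uv by (auto simp: convex_on_def)
    also have "\<dots> \<le> u * g x + v * g y"
      using x y uv by (auto intro!: add_mono mult_left_mono)
    also have "\<dots> \<le> g (u *\<^sub>R x + v *\<^sub>R y)"
      using assms(3) x y uv by (auto simp: concave_on_iff)
    finally show "u *\<^sub>R x + v *\<^sub>R y \<in> {x \<in> K. f x \<le> g x}"
      using \<open>convex K\<close> x y uv by (auto simp: convex_def)
  qed
  moreover have "{x. x extreme_point_of K} \<subseteq> {x \<in> K. f x \<le> g x}"
    using extreme extreme_point_of_def by auto
  ultimately have "convex hull {x. x extreme_point_of K} \<subseteq> {x \<in> K. f x \<le> g x}"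
    by (simp add: hull_minimal)
  with Krein_Milman_Minkowski[OF \<open>compact K\<close> \<open>convex K\<close>] \<open>x \<in> K\<close> show ?thesis
    by blast
qed

lemma polytope_extreme_points_ratio_bound:
  fixes K :: "'a::euclidean_space set" and f g :: "'a \<Rightarrow> real" and z :: 'a
  defines "E \<equiv> {x. x extreme_point_of K \<and> x \<noteq> z}"
  assumes "polytope K" "convex_on K f" "concave_on K g" "E \<noteq> {}"
    and nonneg: "\<And>x. x \<in> E \<Longrightarrow> 0 \<le> f x \<and> 0 \<le> g x"
    and "f z = 0" "0 \<le> g z" "x \<in> K"
  shows "Min (g ` E) / Max (f ` E) * f x \<le> g x"
proof -
  define c where "c = Min (g ` E) / Max (f ` E)"
  have "finite E"
    using finite_polyhedron_extreme_points[OF polytope_imp_polyhedron[OF \<open>polytope K\<close>]]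
    unfolding E_def by (rule finite_subset[rotated]) auto
  have "0 \<le> Min (g ` E)" "0 \<le> Max (f ` E)"
    using \<open>finite E\<close> \<open>E \<noteq> {}\<close> nonneg by (auto simp: Min_ge_iff Max_ge_iff)
  then have "0 \<le> c"
    unfolding c_def by simp
  have "c * f e \<le> g e" if e: "e \<in> E" for e
  proof -
    have "c * f e \<le> c * Max (f ` E)"
      using \<open>0 \<le> c\<close> \<open>finite E\<close> e by (auto intro!: mult_left_mono)
    also have "\<dots> \<le> Min (g ` E)"
      unfolding c_def using \<open>0 \<le> Min (g ` E)\<close> by (cases "Max (f ` E) = 0") auto
    also have "\<dots> \<le> g e"
      using \<open>finite E\<close> e by simp
    finally show ?thesis .
  qed
  then have extreme: "c * f e \<le> g e" if "e extreme_point_of K" for e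
    using that \<open>f z = 0\<close> \<open>0 \<le> g z\<close> unfolding E_def by (cases "e = z") auto
  have "convex_on K (\<lambda>x. c * f x)"
    using \<open>0 \<le> c\<close> \<open>convex_on K f\<close> by (rule convex_on_cmul)
  from convex_le_concave_from_extreme_points[OF polytope_imp_compact[OF \<open>polytope K\<close>]
      this \<open>concave_on K g\<close> extreme \<open>x \<in> K\<close>]
  show ?thesis
    unfolding c_def .
qed

lemma sum_vec_eq_inner_indicator:
  fixes v :: "real ^ 'n::finite"
  shows "(\<Sum>x\<in>A. v $ x) = (\<chi> x. if x \<in> A then 1 else 0) \<bullet> v"
proof -
  have "(\<chi> x. if x \<in> A then 1 else 0) \<bullet> v = (\<Sum>x\<in>UNIV. if x \<in> A then v $ x else 0)"
    by (auto simp: inner_vec_def intro: sum.cong)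
  then show ?thesis
    by (simp add: sum.If_cases)
qed

lemma polyhedron_vec_sum_eq: "polyhedron {v :: real ^ 'n::finite. (\<Sum>x\<in>A. v $ x) = c}"
  unfolding sum_vec_eq_inner_indicator by (rule polyhedron_hyperplane)

lemma polyhedron_vec_nth_nonneg: "polyhedron {v :: real ^ 'n::finite. 0 \<le> v $ x}"
proof -
  have "{v :: real ^ 'n. 0 \<le> v $ x} = {v. (\<chi> y. if y \<in> {x} then 1 else 0) \<bullet> v \<ge> 0}"
    using sum_vec_eq_inner_indicator[where A="{x}"] by simp
  then show ?thesis
    by (simp only: polyhedron_halfspace_ge)
qed

lemma Mset_eq_Inter:
  "Mset m = (\<Inter>x. {\<mu>. 0 \<le> \<mu> $ x}) \<inter> {\<mu>. (\<Sum>x\<in>UNIV. \<mu> $ x) = 1}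
     \<inter> (\<Inter>s. {\<mu>. (\<Sum>x\<in>{s} \<times> UNIV. \<mu> $ x) = m s})
     \<inter> (\<Inter>a. {\<mu>. (\<Sum>x\<in>UNIV \<times> {a}. \<mu> $ x) = m a})"
  by (auto simp: Mset_def sum.cartesian_product')

lemma Mset_subset_cbox: "Mset m \<subseteq> cbox 0 (\<chi> _. 1)"
proof
  fix \<mu> assume \<mu>: "\<mu> \<in> Mset m"
  have "\<mu> $ x \<le> (\<Sum>x\<in>UNIV. \<mu> $ x)" for x
    using \<mu> by (intro member_le_sum) (auto simp: Mset_def)
  with \<mu> show "\<mu> \<in> cbox 0 (\<chi> _. 1)"
    by (auto simp: Mset_def mem_box_cart)
qed

lemma polytope_Mset: "polytope (Mset m)"
  unfolding polytope_eq_bounded_polyhedron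
proof
  show "polyhedron (Mset m)"
    unfolding Mset_eq_Inter
    by (intro polyhedron_Int polyhedron_Inter)
      (auto simp: polyhedron_vec_sum_eq polyhedron_vec_nth_nonneg)
  show "bounded (Mset m)"
    using Mset_subset_cbox bounded_cbox bounded_subset by blast
qed

lemma Upay_scaleR_add: "Upay u (a *\<^sub>R \<mu> + b *\<^sub>R \<nu>) y = a * Upay u \<mu> y + b * Upay u \<nu> y"
  unfolding Upay_def by (simp add: algebra_simps sum.distrib sum_distrib_left)

lemma Upay_strategy_mix:
  "Upay u \<mu> (\<lambda>a b. e * y a b + (1 - e) * y' a b) = e * Upay u \<mu> y + (1 - e) * Upay u \<mu> y'"
  unfolding Upay_def uext_def
  by (simp add: distrib_left distrib_right sum.distrib sum_distrib_left mult_ac)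

lemma concave_on_Upay_gap:
  assumes "convex S"
  shows "concave_on S (\<lambda>\<mu>. c - Upay u \<mu> y)"
proof -
  have "a * (c - Upay u \<mu> y) + b * (c - Upay u \<nu> y) = c - Upay u (a *\<^sub>R \<mu> + b *\<^sub>R \<nu>) y"
    if "a + b = 1" for a b \<mu> \<nu>
  proof -
    have "a * (c - Upay u \<mu> y) + b * (c - Upay u \<nu> y) = (a + b) * c - (a * Upay u \<mu> y + b * Upay u \<nu> y)"
      by (simp add: algebra_simps)
    with that show ?thesis
      by (simp add: Upay_scaleR_add)
  qed
  with assms show ?thesis
    by (simp add: concave_on_iff)
qed

lemma convex_on_l1dist:
  assumes "convex S"
  shows "convex_on S (\<lambda>\<mu>. l1dist \<mu> \<nu>)"
  unfolding convex_on_def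
proof (intro conjI assms ballI allI impI)
  fix \<mu> \<mu>' and a b :: real
  assume "0 \<le> a" "0 \<le> b" "a + b = 1"
  then have "dist (\<nu> $ i) (a *\<^sub>R \<mu> $ i + b *\<^sub>R \<mu>' $ i)
      \<le> a * dist (\<nu> $ i) (\<mu> $ i) + b * dist (\<nu> $ i) (\<mu>' $ i)" for i
    using convex_on_dist[OF convex_UNIV, of "\<nu> $ i"] by (simp add: convex_on_def)
  then show "l1dist (a *\<^sub>R \<mu> + b *\<^sub>R \<mu>') \<nu> \<le> a * l1dist \<mu> \<nu> + b * l1dist \<mu>' \<nu>"
    unfolding l1dist_def sum_distrib_left sum.distrib[symmetric]
    by (intro sum_mono) (simp add: dist_real_def abs_minus_commute)
qed

lemma l1dist_nonneg: "0 \<le> l1dist \<mu> \<nu>"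
  unfolding l1dist_def by (simp add: sum_nonneg)

lemma l1dist_self [simp]: "l1dist \<mu> \<mu> = 0"
  unfolding l1dist_def by simp

lemma Upay_gap_ge_ratio_l1dist:
  fixes m :: "'s::finite \<Rightarrow> real"
  defines "E \<equiv> {\<nu>. \<nu> extreme_point_of Mset m \<and> \<nu> \<noteq> mu0 m}"
  assumes strict: "\<forall>\<nu>\<in>Mset m - {mu0 m}. Upay u (mu0 m) y > Upay u \<nu> y"
    and "E \<noteq> {}" "\<mu> \<in> Mset m"
  shows "Min ((\<lambda>\<nu>. Upay u (mu0 m) y - Upay u \<nu> y) ` E) / Max ((\<lambda>\<nu>. l1dist \<nu> (mu0 m)) ` E)
           * l1dist \<mu> (mu0 m)
         \<le> Upay u (mu0 m) y - Upay u \<mu> y"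
proof -
  have convex: "convex (Mset m)"
    by (simp add: polytope_Mset polytope_imp_convex)
  have nonneg: "0 \<le> l1dist \<nu> (mu0 m) \<and> 0 \<le> Upay u (mu0 m) y - Upay u \<nu> y"
    if "\<nu> \<in> E" for \<nu>
  proof -
    have "\<nu> \<in> Mset m - {mu0 m}"
      using that by (auto simp: E_def extreme_point_of_def)
    with strict show ?thesis
      by (simp add: l1dist_nonneg less_imp_le)
  qed
  have "0 \<le> Upay u (mu0 m) y - Upay u (mu0 m) y"
    by simp
  with \<open>E \<noteq> {}\<close> nonneg show ?thesis
    unfolding E_def
    by (rule polytope_extreme_points_ratio_bound[OF polytope_Mset convex_on_l1dist[OF convex]
          concave_on_Upay_gap[OF convex] _ _ l1dist_self _ \<open>\<mu> \<in> Mset m\<close>])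
qed

theorem lemma3:
  fixes m :: "'s::finite \<Rightarrow> real"
    and u1 u2 :: "'s \<Rightarrow> 'b::finite \<Rightarrow> real"
    and y0 ybar :: "'s \<Rightarrow> 'b \<Rightarrow> real"
    and \<epsilon> :: real
  assumes m_pos: "\<forall>s. 0 < m s" and m_sum: "(\<Sum>s\<in>UNIV. m s) = 1"
    and y0_str: "is_strategy y0"
    and y0_strict: "\<forall>\<mu>\<in>Mset m - {mu0 m}. Upay u1 (mu0 m) y0 > Upay u1 \<mu> y0"
    and y0_2: "Upay u2 (mu0 m) y0 > v2 u2 m"
    and ybar_str: "is_strategy ybar"
    and ybar_1: "\<forall>\<mu>\<in>Mset m. Upay u1 (mu0 m) ybar \<ge> Upay u1 \<mu> ybar"
    and ybar_2: "Upay u2 (mu0 m) ybar \<ge> v2 u2 m"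
    and eps: "0 < \<epsilon>" "\<epsilon> \<le> 1"
    and ext: "\<exists>\<mu>e. \<mu>e extreme_point_of Mset m \<and> \<mu>e \<noteq> mu0 m"
  shows "\<forall>\<mu>\<in>Mset m.
     Upay u1 (mu0 m) (\<lambda>a b. \<epsilon> * y0 a b + (1 - \<epsilon>) * ybar a b)
       - Upay u1 \<mu> (\<lambda>a b. \<epsilon> * y0 a b + (1 - \<epsilon>) * ybar a b)
     \<ge> \<epsilon> * Min ((\<lambda>\<mu>e. Upay u1 (mu0 m) y0 - Upay u1 \<mu>e y0)
                   ` {\<mu>e. \<mu>e extreme_point_of Mset m \<and> \<mu>e \<noteq> mu0 m})
       / Max ((\<lambda>\<mu>e. l1dist \<mu>e (mu0 m))
                   ` {\<mu>e. \<mu>e extreme_point_of Mset m \<and> \<mu>e \<noteq> mu0 m})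
       * l1dist \<mu> (mu0 m)"
proof (intro ballI)
  fix \<mu> assume "\<mu> \<in> Mset m"
  let ?E = "{\<mu>e. \<mu>e extreme_point_of Mset m \<and> \<mu>e \<noteq> mu0 m}"
  let ?gap = "\<lambda>y \<nu>. Upay u1 (mu0 m) y - Upay u1 \<nu> y"
  let ?ratio = "Min (?gap y0 ` ?E) / Max ((\<lambda>\<nu>. l1dist \<nu> (mu0 m)) ` ?E)"
  have "?E \<noteq> {}"
    using ext by blast
  with y0_strict have "?ratio * l1dist \<mu> (mu0 m) \<le> ?gap y0 \<mu>"
    using \<open>\<mu> \<in> Mset m\<close> by (rule Upay_gap_ge_ratio_l1dist)
  then have "\<epsilon> * (?ratio * l1dist \<mu> (mu0 m)) \<le> \<epsilon> * ?gap y0 \<mu>"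
    by (rule mult_left_mono) (use eps in simp)
  moreover have "0 \<le> (1 - \<epsilon>) * ?gap ybar \<mu>"
    using ybar_1 \<open>\<mu> \<in> Mset m\<close> eps by simp
  ultimately have "\<epsilon> * (?ratio * l1dist \<mu> (mu0 m)) \<le> \<epsilon> * ?gap y0 \<mu> + (1 - \<epsilon>) * ?gap ybar \<mu>"
    by linarith
  then show "\<epsilon> * Min (?gap y0 ` ?E) / Max ((\<lambda>\<nu>. l1dist \<nu> (mu0 m)) ` ?E) * l1dist \<mu> (mu0 m)
      \<le> ?gap (\<lambda>a b. \<epsilon> * y0 a b + (1 - \<epsilon>) * ybar a b) \<mu>"
    unfolding Upay_strategy_mix by (simp add: algebra_simps)
qed

end
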